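(* Let $(X,T)$ be a minimal system and $n,d\in\mathbb{N}$. Let $(x^1_i)_{i=1}^d,\dots,(x^n_i)_{i=1}^d\in N_d(T)$. If the point $((x^1_i)_{i=1}^d,\dots,(x^n_i)_{i=1}^d)\in X^{nd}$ is minimal for the diagonal action $T\times\cdots\times T$, then $((x^1_i)_{i=1}^d,\dots,(x^n_i)_{i=1}^d)$ is a minimal point of $((N_d(T))^n,\mathcal{G}_d(T))$ under the diagonal action of $\mathcal{G}_d(T)$.
   Context: $N_d(T)=\overline{\{(T^{p+q}x,\dots,T^{p+dq}x):x\in X,p,q\in\mathbb{Z}\}}\subset X^d$; $\mathcal{G}_d(T)=\langle T\times\cdots\times T,\ T\times T^2\times\cdots\times T^d\rangle$. A point is minimal if its orbit closure is a minimal set. *)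

theory Defs
  imports "HOL-Analysis.Analysis"
begin

definition tpow :: "('a \<Rightarrow> 'a) \<Rightarrow> int \<Rightarrow> 'a \<Rightarrow> 'a" where
  "tpow T k = (if 0 \<le> k then T ^^ nat k else inv T ^^ nat (- k))"

(* (X,T) topological dynamical system: X (the universe of type 'a) compact metric,
   T a homeomorphism of X; minimal: no proper nonempty closed invariant subset. *)
definition minimal_system :: "('a::metric_space \<Rightarrow> 'a) \<Rightarrow> bool" where
  "minimal_system T \<longleftrightarrow> compact (UNIV :: 'a set) \<and> homeomorphism UNIV UNIV T (inv T) \<and>
     (\<forall>Y. closed Y \<and> Y \<noteq> {} \<and> T ` Y \<subseteq> Y \<longrightarrow> Y = UNIV)"

(* Points of X^d are functions nat \<Rightarrow> 'a; coordinate i (0-based) is the paper's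
   coordinate i+1; coordinates i \<ge> d are 'undefined'. *)
definition Nd :: "('a::topological_space \<Rightarrow> 'a) \<Rightarrow> nat \<Rightarrow> (nat \<Rightarrow> 'a) set" where
  "Nd T d = closure {(\<lambda>i. if i < d then tpow T (p + q * int (Suc i)) x else undefined)
                      | x p q. True}"

(* Points of X^{nd} = (X^d)^n are functions z :: nat \<Rightarrow> nat \<Rightarrow> 'a, z j i = x^{j+1}_{i+1}.
   The element \<tau>^p \<sigma>^q of G_d(T) (\<tau> = T\<times>...\<times>T, \<sigma> = T\<times>T^2\<times>...\<times>T^d), acting
   diagonally on the n blocks; coordinates outside the range are left fixed. *)
definition gact :: "('a \<Rightarrow> 'a) \<Rightarrow> nat \<Rightarrow> nat \<Rightarrow> int \<Rightarrow> int \<Rightarrow> (nat \<Rightarrow> nat \<Rightarrow> 'a) \<Rightarrow> (nat \<Rightarrow> nat \<Rightarrow> 'a)" where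
  "gact T n d p q z = (\<lambda>j i. if j < n \<and> i < d then tpow T (p + q * int (Suc i)) (z j i) else z j i)"

definition Gd_diag :: "('a \<Rightarrow> 'a) \<Rightarrow> nat \<Rightarrow> nat \<Rightarrow> ((nat \<Rightarrow> nat \<Rightarrow> 'a) \<Rightarrow> (nat \<Rightarrow> nat \<Rightarrow> 'a)) set" where
  "Gd_diag T n d = {gact T n d p q | p q. True}"

definition Tdiag :: "('a \<Rightarrow> 'a) \<Rightarrow> nat \<Rightarrow> nat \<Rightarrow> ((nat \<Rightarrow> nat \<Rightarrow> 'a) \<Rightarrow> (nat \<Rightarrow> nat \<Rightarrow> 'a)) set" where
  "Tdiag T n d = {gact T n d p 0 | p. True}"

definition Nd_pow :: "('a::topological_space \<Rightarrow> 'a) \<Rightarrow> nat \<Rightarrow> nat \<Rightarrow> (nat \<Rightarrow> nat \<Rightarrow> 'a) set" where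
  "Nd_pow T n d = {z. (\<forall>j<n. z j \<in> Nd T d) \<and> (\<forall>j\<ge>n. z j = (\<lambda>i. undefined))}"

definition minimal_set :: "('b \<Rightarrow> 'b) set \<Rightarrow> 'b::topological_space set \<Rightarrow> bool" where
  "minimal_set A Y \<longleftrightarrow> Y \<noteq> {} \<and> closed Y \<and> (\<forall>g\<in>A. g ` Y \<subseteq> Y) \<and>
     (\<forall>Z. Z \<subseteq> Y \<and> Z \<noteq> {} \<and> closed Z \<and> (\<forall>g\<in>A. g ` Z \<subseteq> Z) \<longrightarrow> Z = Y)"

definition orbit :: "('b \<Rightarrow> 'b) set \<Rightarrow> 'b \<Rightarrow> 'b set" where
  "orbit A z = {g z | g. g \<in> A}"

definition minimal_point :: "('b \<Rightarrow> 'b) set \<Rightarrow> 'b::topological_space \<Rightarrow> bool" where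
  "minimal_point A z \<longleftrightarrow> minimal_set A (closure (orbit A z))"

end

theory Submission
  imports Defs
begin

(* Let E(\<tau>) \<subseteq> E(G) be the enveloping semigroups of {\<tau>^p} and G_d(T): the closures, in the
   product topology, of the coordinate maps of \<tau>^p and \<tau>^p \<sigma>^q. They are compact right
   topological semigroups, and a point is minimal for an action iff it is fixed by a minimal
   idempotent of the enveloping semigroup (Auslander-Ellis). So z = u z for a minimal idempotent u
   of E(\<tau>). Take a minimal idempotent f of E(G) below u (u f = f = f u). Each diagonal part
   (\<lambda>i. f k) of f is an idempotent of E(\<tau>) below u, hence equals u; thus f = u, u is minimal in
   E(G), and z is a minimal point for G_d(T). *)

lemma Hausdorff_space_euclidean_t2: "Hausdorff_space (euclidean :: 'a::t2_space topology)"
  unfolding Hausdorff_space_def disjnt_def using hausdorff by auto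

lemma Hausdorff_space_euclidean_fun:
  assumes "Hausdorff_space (euclidean :: 'b::topological_space topology)"
  shows "Hausdorff_space (euclidean :: ('a \<Rightarrow> 'b) topology)"
proof -
  have "Hausdorff_space (product_topology (\<lambda>_::'a. euclidean :: 'b topology) UNIV)"
    using assms by (simp add: Hausdorff_space_product_topology)
  then show ?thesis by (simp add: euclidean_product_topology)
qed

lemma compact_UNIV_fun:
  assumes "compact (UNIV :: 'b::topological_space set)"
  shows "compact (UNIV :: ('a \<Rightarrow> 'b) set)"
proof -
  have "compact_space (euclidean :: 'b topology)"
    using assms by (simp add: compact_space_def compactin_euclidean_iff)
  then have "compact_space (product_topology (\<lambda>_::'a. euclidean :: 'b topology) UNIV)"
    by (simp add: compact_space_product_topology)
  then show ?thesis
    by (simp add: euclidean_product_topology compact_space_def compactin_euclidean_iff)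
qed

lemma continuous_on_eval2: "continuous_on UNIV (\<lambda>f::'a \<Rightarrow> 'b \<Rightarrow> 'c::topological_space. f x y)"
  by (rule continuous_on_product_then_coordinatewise[OF continuous_on_product_coordinates])

lemma compact_chain_Inter_nonempty:
  assumes "compact K" "\<C> \<noteq> {}" "chain\<^sub>\<subseteq> \<C>"
    and "\<And>A. A \<in> \<C> \<Longrightarrow> closed A \<and> A \<noteq> {} \<and> A \<subseteq> K"
  shows "\<Inter>\<C> \<noteq> {}"
proof -
  have "K \<inter> \<Inter>\<C> \<noteq> {}"
  proof (rule compact_imp_fip[OF \<open>compact K\<close>])
    show "closed A" if "A \<in> \<C>" for A using assms(4)[OF that] by blast
    fix \<G> assume "finite \<G>" "\<G> \<subseteq> \<C>"
    show "K \<inter> \<Inter>\<G> \<noteq> {}"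
    proof (cases "\<G> = {}")
      case True
      then show ?thesis using \<open>\<C> \<noteq> {}\<close> assms(4) by auto
    next
      case False
      have "subset.chain \<C> \<G>"
        using \<open>\<G> \<subseteq> \<C>\<close> \<open>chain\<^sub>\<subseteq> \<C>\<close> by (auto simp: subset.chain_def chain_subset_def)
      then have "\<Inter>\<G> \<in> \<C>"
        using Inter_in_chain[OF \<open>finite \<G>\<close> False] \<open>\<G> \<subseteq> \<C>\<close> by blast
      then show ?thesis using assms(4) by (simp add: Int_absorb1)
    qed
  qed
  then show ?thesis by blast
qed

lemma closed_Zorn_minimal:
  fixes P :: "'a::topological_space set \<Rightarrow> bool"
  assumes "compact K" and "P A\<^sub>0"
    and P_closed: "\<And>A. P A \<Longrightarrow> closed A \<and> A \<noteq> {} \<and> A \<subseteq> K"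
    and P_chain: "\<And>\<C>. \<C> \<noteq> {} \<Longrightarrow> \<forall>A\<in>\<C>. P A \<Longrightarrow> chain\<^sub>\<subseteq> \<C> \<Longrightarrow> \<Inter>\<C> \<noteq> {} \<Longrightarrow> P (\<Inter>\<C>)"
  shows "\<exists>A. P A \<and> A \<subseteq> A\<^sub>0 \<and> (\<forall>B. P B \<and> B \<subseteq> A \<longrightarrow> B = A)"
proof -
  define \<F> where "\<F> = {A. P A \<and> A \<subseteq> A\<^sub>0}"
  have "\<exists>M\<in>\<F>. \<forall>A\<in>\<F>. A \<subseteq> M \<longrightarrow> A = M"
  proof (rule predicate_Zorn)
    show "partial_order_on \<F> (relation_of (\<lambda>A B. B \<subseteq> A) \<F>)"
      by (rule partial_order_on_relation_ofI) auto
    fix \<C> assume "\<C> \<in> Chains (relation_of (\<lambda>A B. B \<subseteq> A) \<F>)"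
    then have \<C>: "\<C> \<subseteq> \<F>" "chain\<^sub>\<subseteq> \<C>"
      by (auto simp: Chains_def relation_of_def chain_subset_def)
    show "\<exists>U\<in>\<F>. \<forall>A\<in>\<C>. U \<subseteq> A"
    proof (cases "\<C> = {}")
      case True
      then show ?thesis using \<open>P A\<^sub>0\<close> by (auto simp: \<F>_def)
    next
      case False
      have "\<Inter>\<C> \<noteq> {}"
        using compact_chain_Inter_nonempty[OF \<open>compact K\<close> False \<C>(2)] \<C>(1) P_closed
        by (auto simp: \<F>_def)
      then have "P (\<Inter>\<C>)"
        using P_chain[OF False _ \<C>(2)] \<C>(1) by (auto simp: \<F>_def)
      moreover have "\<Inter>\<C> \<subseteq> A\<^sub>0"
        using False \<C>(1) by (auto simp: \<F>_def)
      ultimately show ?thesis by (auto simp: \<F>_def)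
    qed
  qed
  then show ?thesis unfolding \<F>_def by (metis (mono_tags, lifting) mem_Collect_eq order_trans)
qed

section \<open>Compact right topological semigroups\<close>

locale compact_rt_semigroup =
  fixes S :: "'b::topological_space set" and mult :: "'b \<Rightarrow> 'b \<Rightarrow> 'b" (infixl "\<cdot>" 70)
  assumes Hausdorff: "Hausdorff_space (euclidean :: 'b topology)"
    and compact: "compact S"
    and mult_closed: "a \<in> S \<Longrightarrow> b \<in> S \<Longrightarrow> a \<cdot> b \<in> S"
    and assoc: "a \<in> S \<Longrightarrow> b \<in> S \<Longrightarrow> c \<in> S \<Longrightarrow> a \<cdot> b \<cdot> c = a \<cdot> (b \<cdot> c)"
    and continuous_mult_right: "b \<in> S \<Longrightarrow> continuous_on S (\<lambda>a. a \<cdot> b)"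
begin

definition closed_subsemigroup :: "'b set \<Rightarrow> bool" where
  "closed_subsemigroup A \<longleftrightarrow> closed A \<and> A \<noteq> {} \<and> A \<subseteq> S \<and> (\<forall>a\<in>A. \<forall>b\<in>A. a \<cdot> b \<in> A)"

definition left_ideal :: "'b set \<Rightarrow> bool" where
  "left_ideal I \<longleftrightarrow> I \<noteq> {} \<and> I \<subseteq> S \<and> (\<forall>s\<in>S. \<forall>a\<in>I. s \<cdot> a \<in> I)"

definition min_left_ideal :: "'b set \<Rightarrow> bool" where
  "min_left_ideal L \<longleftrightarrow> left_ideal L \<and> (\<forall>I. left_ideal I \<and> I \<subseteq> L \<longrightarrow> I = L)"

definition min_idempotent :: "'b \<Rightarrow> bool" where
  "min_idempotent u \<longleftrightarrow> u \<cdot> u = u \<and> (\<exists>L. min_left_ideal L \<and> u \<in> L)"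

lemma Hausdorff_compact_imp_closed: "compact (K :: 'b set) \<Longrightarrow> closed K"
  unfolding closed_closedin by (rule compactin_imp_closedin[OF Hausdorff]) (simp add: compactin_euclidean_iff)

lemma closed_subset_imp_compact: "closed A \<Longrightarrow> A \<subseteq> S \<Longrightarrow> compact A"
  using compact_Int_closed[OF compact, of A] by (simp add: Int_absorb1)

lemma closed_image_mult_right:
  assumes "closed A" "A \<subseteq> S" "a \<in> S"
  shows "closed ((\<lambda>s. s \<cdot> a) ` A)"
proof -
  have "compact ((\<lambda>s. s \<cdot> a) ` A)"
    using compact_continuous_image[OF continuous_on_subset[OF continuous_mult_right[OF assms(3)] assms(2)]]
      closed_subset_imp_compact[OF assms(1,2)] .
  then show ?thesis by (rule Hausdorff_compact_imp_closed)
qed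

lemma closed_fibre_mult_right:
  assumes "closed A" "A \<subseteq> S" "a \<in> S"
  shows "closed {s \<in> A. s \<cdot> a = b}"
proof -
  have "closed {b}"
    unfolding closed_closedin using Hausdorff_imp_t1_space[OF Hausdorff] by (simp add: t1_space_closedin_singleton)
  then have "closed (A \<inter> (\<lambda>s. s \<cdot> a) -` {b})"
    by (rule continuous_closed_preimage[OF continuous_on_subset[OF continuous_mult_right[OF assms(3)] assms(2)] assms(1)])
  then show ?thesis by (simp add: Int_def)
qed

lemma left_ideal_image_mult_right:
  assumes "a \<in> S"
  shows "left_ideal ((\<lambda>s. s \<cdot> a) ` S)"
  unfolding left_ideal_def
proof (intro conjI ballI)
  show "(\<lambda>s. s \<cdot> a) ` S \<noteq> {}" "(\<lambda>s. s \<cdot> a) ` S \<subseteq> S"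
    using assms mult_closed by auto
  fix s x assume "s \<in> S" "x \<in> (\<lambda>s. s \<cdot> a) ` S"
  then obtain t where "t \<in> S" "x = t \<cdot> a" by auto
  then have "s \<cdot> x = (s \<cdot> t) \<cdot> a" using assoc \<open>s \<in> S\<close> assms by simp
  then show "s \<cdot> x \<in> (\<lambda>s. s \<cdot> a) ` S" using mult_closed \<open>s \<in> S\<close> \<open>t \<in> S\<close> by simp
qed

lemma exists_minimal_closed_subsemigroup:
  assumes "closed_subsemigroup A"
  shows "\<exists>B. closed_subsemigroup B \<and> B \<subseteq> A \<and>
    (\<forall>B'. closed_subsemigroup B' \<and> B' \<subseteq> B \<longrightarrow> B' = B)"
proof (rule closed_Zorn_minimal[where P = closed_subsemigroup, OF compact assms])
  show "closed B \<and> B \<noteq> {} \<and> B \<subseteq> S" if "closed_subsemigroup B" for B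
    using that by (simp add: closed_subsemigroup_def)
  fix \<C> assume "\<C> \<noteq> {}" "\<forall>B\<in>\<C>. closed_subsemigroup B" "\<Inter>\<C> \<noteq> {}"
  then show "closed_subsemigroup (\<Inter>\<C>)"
    unfolding closed_subsemigroup_def by (auto intro: closed_Inter; blast)
qed

lemma closed_subsemigroup_image_mult_right:
  assumes B: "closed_subsemigroup B" and "a \<in> B"
  shows "closed_subsemigroup ((\<lambda>s. s \<cdot> a) ` B)"
proof -
  have "closed B" "B \<subseteq> S" and B_mult: "\<And>x y. x \<in> B \<Longrightarrow> y \<in> B \<Longrightarrow> x \<cdot> y \<in> B"
    using B by (auto simp: closed_subsemigroup_def)
  have "a \<in> S" using \<open>a \<in> B\<close> \<open>B \<subseteq> S\<close> by auto
  show ?thesis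
    unfolding closed_subsemigroup_def
  proof (intro conjI ballI)
    show "closed ((\<lambda>s. s \<cdot> a) ` B)"
      using closed_image_mult_right[OF \<open>closed B\<close> \<open>B \<subseteq> S\<close> \<open>a \<in> S\<close>] .
    show "(\<lambda>s. s \<cdot> a) ` B \<noteq> {}" "(\<lambda>s. s \<cdot> a) ` B \<subseteq> S"
      using \<open>a \<in> B\<close> B_mult \<open>B \<subseteq> S\<close> by auto
    fix x y assume "x \<in> (\<lambda>s. s \<cdot> a) ` B" "y \<in> (\<lambda>s. s \<cdot> a) ` B"
    then obtain s t where "s \<in> B" "t \<in> B" "x = s \<cdot> a" "y = t \<cdot> a" by auto
    then have "x \<in> B" using B_mult \<open>a \<in> B\<close> by simp
    then have "x \<cdot> y = (x \<cdot> t) \<cdot> a"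
      using assoc[of x t a] \<open>y = t \<cdot> a\<close> \<open>t \<in> B\<close> \<open>a \<in> S\<close> \<open>B \<subseteq> S\<close> by (simp add: subset_iff)
    moreover have "x \<cdot> t \<in> B" using B_mult \<open>x \<in> B\<close> \<open>t \<in> B\<close> by simp
    ultimately show "x \<cdot> y \<in> (\<lambda>s. s \<cdot> a) ` B" by simp
  qed
qed

lemma closed_subsemigroup_left_stabiliser:
  assumes B: "closed_subsemigroup B" and "a \<in> S" "\<exists>b\<in>B. b \<cdot> a = a"
  shows "closed_subsemigroup {b \<in> B. b \<cdot> a = a}"
proof -
  have "closed B" "B \<subseteq> S" and B_mult: "\<And>x y. x \<in> B \<Longrightarrow> y \<in> B \<Longrightarrow> x \<cdot> y \<in> B"
    using B by (auto simp: closed_subsemigroup_def)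
  show ?thesis
    unfolding closed_subsemigroup_def
  proof (intro conjI ballI)
    show "closed {b \<in> B. b \<cdot> a = a}"
      using closed_fibre_mult_right[OF \<open>closed B\<close> \<open>B \<subseteq> S\<close> \<open>a \<in> S\<close>] .
    show "{b \<in> B. b \<cdot> a = a} \<noteq> {}" "{b \<in> B. b \<cdot> a = a} \<subseteq> S"
      using assms(3) \<open>B \<subseteq> S\<close> by auto
    fix x y assume "x \<in> {b \<in> B. b \<cdot> a = a}" "y \<in> {b \<in> B. b \<cdot> a = a}"
    then show "x \<cdot> y \<in> {b \<in> B. b \<cdot> a = a}"
      using assoc[of x y a] B_mult \<open>a \<in> S\<close> \<open>B \<subseteq> S\<close> by auto
  qed
qed

lemma minimal_closed_subsemigroup_idempotent:
  assumes B: "closed_subsemigroup B" and min: "\<forall>B'. closed_subsemigroup B' \<and> B' \<subseteq> B \<longrightarrow> B' = B"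
    and "a \<in> B"
  shows "a \<cdot> a = a"
proof -
  have "B \<subseteq> S" and B_mult: "\<And>x y. x \<in> B \<Longrightarrow> y \<in> B \<Longrightarrow> x \<cdot> y \<in> B"
    using B by (auto simp: closed_subsemigroup_def)
  then have "(\<lambda>s. s \<cdot> a) ` B = B"
    using min closed_subsemigroup_image_mult_right[OF B \<open>a \<in> B\<close>] \<open>a \<in> B\<close> by blast
  then have "\<exists>b\<in>B. b \<cdot> a = a" using \<open>a \<in> B\<close> by (metis imageE)
  then have "{b \<in> B. b \<cdot> a = a} = B"
    using min closed_subsemigroup_left_stabiliser[OF B] \<open>a \<in> B\<close> \<open>B \<subseteq> S\<close> by blast
  then show ?thesis using \<open>a \<in> B\<close> by blast
qed

lemma exists_idempotent:
  assumes "closed_subsemigroup A"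
  shows "\<exists>e\<in>A. e \<cdot> e = e"
proof -
  obtain B where "closed_subsemigroup B" "B \<subseteq> A"
    and "\<forall>B'. closed_subsemigroup B' \<and> B' \<subseteq> B \<longrightarrow> B' = B"
    using exists_minimal_closed_subsemigroup[OF assms] by blast
  moreover obtain a where "a \<in> B"
    using \<open>closed_subsemigroup B\<close> by (auto simp: closed_subsemigroup_def)
  ultimately show ?thesis using minimal_closed_subsemigroup_idempotent by blast
qed

lemma min_left_ideal_eq_image:
  assumes L: "min_left_ideal L" and "v \<in> L"
  shows "(\<lambda>s. s \<cdot> v) ` S = L"
proof -
  have "left_ideal L" using L by (simp add: min_left_ideal_def)
  then have "v \<in> S" "(\<lambda>s. s \<cdot> v) ` S \<subseteq> L"
    using \<open>v \<in> L\<close> by (auto simp: left_ideal_def)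
  then show ?thesis using L left_ideal_image_mult_right by (simp add: min_left_ideal_def)
qed

lemma closed_min_left_ideal:
  assumes L: "min_left_ideal L"
  shows "closed L"
proof -
  obtain v where "v \<in> L" "v \<in> S"
    using L by (auto simp: min_left_ideal_def left_ideal_def)
  then show ?thesis
    using min_left_ideal_eq_image[OF L] closed_image_mult_right[OF Hausdorff_compact_imp_closed[OF compact] subset_refl] by metis
qed

lemma min_left_idealD:
  assumes "min_left_ideal L"
  shows "closed L" "L \<noteq> {}" "L \<subseteq> S" "\<And>s a. s \<in> S \<Longrightarrow> a \<in> L \<Longrightarrow> s \<cdot> a \<in> L"
  using assms closed_min_left_ideal unfolding min_left_ideal_def left_ideal_def by blast+

lemma exists_min_left_ideal:
  assumes J: "left_ideal J"
  shows "\<exists>L. min_left_ideal L \<and> L \<subseteq> J"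
proof -
  let ?P = "\<lambda>B. closed B \<and> left_ideal B"
  obtain a where "a \<in> J" "a \<in> S" using J by (auto simp: left_ideal_def)
  have P_image: "?P ((\<lambda>s. s \<cdot> b) ` S)" if "b \<in> S" for b
    using closed_image_mult_right[OF Hausdorff_compact_imp_closed[OF compact] subset_refl that]
      left_ideal_image_mult_right[OF that] by simp
  have "\<exists>L. ?P L \<and> L \<subseteq> (\<lambda>s. s \<cdot> a) ` S \<and> (\<forall>B. ?P B \<and> B \<subseteq> L \<longrightarrow> B = L)"
  proof (rule closed_Zorn_minimal[where P = ?P, OF compact P_image[OF \<open>a \<in> S\<close>]])
    show "closed B \<and> B \<noteq> {} \<and> B \<subseteq> S" if "?P B" for B
      using that by (auto simp: left_ideal_def)
    fix \<C> assume "\<C> \<noteq> {}" "\<forall>B\<in>\<C>. ?P B" "\<Inter>\<C> \<noteq> {}"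
    then show "?P (\<Inter>\<C>)"
      unfolding left_ideal_def by (auto intro: closed_Inter; blast)
  qed
  then obtain L where L: "?P L" "L \<subseteq> (\<lambda>s. s \<cdot> a) ` S" and L_min: "\<forall>B. ?P B \<and> B \<subseteq> L \<longrightarrow> B = L"
    by blast
  have "min_left_ideal L"
    unfolding min_left_ideal_def
  proof (intro conjI allI impI)
    show "left_ideal L" using L by simp
    fix I assume I: "left_ideal I \<and> I \<subseteq> L"
    then obtain b where "b \<in> I" "b \<in> S" by (auto simp: left_ideal_def)
    then have "(\<lambda>s. s \<cdot> b) ` S \<subseteq> I" using I by (auto simp: left_ideal_def)
    then have "(\<lambda>s. s \<cdot> b) ` S = L" using L_min P_image[OF \<open>b \<in> S\<close>] I by blast
    then show "I = L" using I \<open>(\<lambda>s. s \<cdot> b) ` S \<subseteq> I\<close> by blast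
  qed
  moreover have "(\<lambda>s. s \<cdot> a) ` S \<subseteq> J" using J \<open>a \<in> J\<close> by (auto simp: left_ideal_def)
  ultimately show ?thesis using L(2) by blast
qed

lemma exists_min_idempotent_below:
  assumes "e \<in> S" "e \<cdot> e = e"
  shows "\<exists>f. min_idempotent f \<and> e \<cdot> f = f \<and> f \<cdot> e = f"
proof -
  obtain L where L: "min_left_ideal L" "L \<subseteq> (\<lambda>s. s \<cdot> e) ` S"
    using exists_min_left_ideal[OF left_ideal_image_mult_right[OF \<open>e \<in> S\<close>]] by blast
  note L_ideal = min_left_idealD(4)[OF L(1)]
  have "L \<subseteq> S" using min_left_idealD[OF L(1)] by blast
  then have "closed_subsemigroup L"
    unfolding closed_subsemigroup_def using min_left_idealD[OF L(1)] by blast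
  then obtain w where "w \<in> L" "w \<cdot> w = w" using exists_idempotent by blast
  then have "w \<in> S" using \<open>L \<subseteq> S\<close> by auto
  obtain s where "s \<in> S" "w = s \<cdot> e" using \<open>w \<in> L\<close> L(2) by auto
  then have we: "w \<cdot> e = w" using assoc[of s e e] \<open>e \<in> S\<close> \<open>e \<cdot> e = e\<close> by simp
  define f where "f = e \<cdot> w"
  have "f \<cdot> f = e \<cdot> (w \<cdot> (e \<cdot> w))"
    using assoc[of e w "e \<cdot> w"] mult_closed \<open>e \<in> S\<close> \<open>w \<in> S\<close> by (simp add: f_def)
  moreover have "w \<cdot> (e \<cdot> w) = w"
    using assoc[of w e w] \<open>e \<in> S\<close> \<open>w \<in> S\<close> we \<open>w \<cdot> w = w\<close> by simp
  ultimately have "f \<cdot> f = f" by (simp add: f_def)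
  moreover have "f \<in> L" using L_ideal \<open>e \<in> S\<close> \<open>w \<in> L\<close> by (simp add: f_def)
  moreover have "e \<cdot> f = f" using assoc[of e e w] \<open>e \<in> S\<close> \<open>w \<in> S\<close> \<open>e \<cdot> e = e\<close> by (simp add: f_def)
  moreover have "f \<cdot> e = f" using assoc[of e w e] \<open>e \<in> S\<close> \<open>w \<in> S\<close> we by (simp add: f_def)
  ultimately show ?thesis using L(1) by (auto simp: min_idempotent_def)
qed

lemma min_idempotent_mem: "min_idempotent u \<Longrightarrow> u \<in> S"
  unfolding min_idempotent_def min_left_ideal_def left_ideal_def by blast

lemma min_idempotent_minimal:
  assumes "min_idempotent u" "v \<in> S" "v \<cdot> v = v" "u \<cdot> v = v" "v \<cdot> u = v"
  shows "v = u"
proof -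
  obtain L where L: "min_left_ideal L" "u \<in> L" using assms(1) by (auto simp: min_idempotent_def)
  then have "v \<cdot> u \<in> L" using assms(2) by (auto simp: min_left_ideal_def left_ideal_def)
  then have "v \<in> L" using assms(5) by simp
  then obtain s where "s \<in> S" "u = s \<cdot> v" using min_left_ideal_eq_image[OF L(1)] L(2) by blast
  then have "u \<cdot> v = u" using assoc[of s v v] assms(2,3) by simp
  then show ?thesis using assms(4) by simp
qed

end

section \<open>Enveloping semigroups and minimal points\<close>

lemma orbit_image: "orbit (f ` G) z = (\<lambda>g. f g z) ` G"
  by (auto simp: orbit_def)

locale enveloping_action =
  compact_rt_semigroup "closure G" mult
  for G :: "'b::topological_space set" and mult :: "'b \<Rightarrow> 'b \<Rightarrow> 'b" (infixl "\<cdot>" 70) +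
  fixes act :: "'b \<Rightarrow> 'x::t2_space \<Rightarrow> 'x"
  assumes mult_mem: "a \<in> G \<Longrightarrow> b \<in> G \<Longrightarrow> a \<cdot> b \<in> G"
    and act_mult: "act (a \<cdot> b) x = act a (act b x)"
    and continuous_act_left: "continuous_on UNIV (\<lambda>a. act a x)"
begin

lemma act_closure_mem:
  assumes "closed Z" "\<forall>g\<in>act ` G. g ` Z \<subseteq> Z" "x \<in> Z" "b \<in> closure G"
  shows "act b x \<in> Z"
proof -
  have "(\<lambda>b. act b x) ` G \<subseteq> Z" using assms(2,3) by blast
  then have "(\<lambda>b. act b x) ` closure G \<subseteq> Z"
    by (rule image_closure_subset[OF continuous_on_subset[OF continuous_act_left subset_UNIV] \<open>closed Z\<close>])
  then show ?thesis using \<open>b \<in> closure G\<close> by blast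
qed

lemma closed_image_act_left:
  assumes "closed A" "A \<subseteq> closure G"
  shows "closed ((\<lambda>b. act b z) ` A)"
  using compact_continuous_image[OF continuous_on_subset[OF continuous_act_left subset_UNIV]
      closed_subset_imp_compact[OF assms]]
  by (rule compact_imp_closed)

lemma closure_orbit_eq: "closure (orbit (act ` G) z) = (\<lambda>b. act b z) ` closure G"
proof
  show "closure (orbit (act ` G) z) \<subseteq> (\<lambda>b. act b z) ` closure G"
    unfolding orbit_image
    by (rule closure_minimal[OF image_mono[OF closure_subset] closed_image_act_left[OF closed_closure subset_refl]])
  show "(\<lambda>b. act b z) ` closure G \<subseteq> closure (orbit (act ` G) z)"
    unfolding orbit_image
    by (rule image_closure_subset[OF continuous_on_subset[OF continuous_act_left subset_UNIV] closed_closure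
          closure_subset])
qed

lemma closure_orbit_invariant: "\<forall>g\<in>act ` G. g ` closure (orbit (act ` G) z) \<subseteq> closure (orbit (act ` G) z)"
proof (intro ballI subsetI)
  fix g x assume "g \<in> act ` G" "x \<in> g ` closure (orbit (act ` G) z)"
  then obtain a b where "a \<in> G" "b \<in> closure G" "x = act a (act b z)"
    by (auto simp: closure_orbit_eq)
  then have "x = act (a \<cdot> b) z" "a \<cdot> b \<in> closure G"
    using act_mult mult_closed[OF subsetD[OF closure_subset \<open>a \<in> G\<close>]] by auto
  then show "x \<in> closure (orbit (act ` G) z)" by (simp add: closure_orbit_eq)
qed

text \<open>If \<open>u\<close> lies in the minimal left ideal \<open>L\<close> and \<open>w = b z\<close>, then \<open>c (b u) = u\<close> for
  some \<open>c\<close>, since \<open>L\<close> is generated by \<open>b u\<close>; hence \<open>c w = u z = z\<close> and \<open>z\<close> returns to every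
  closed invariant set.\<close>

lemma min_idempotent_fixed_imp_minimal_point:
  assumes u: "min_idempotent u" and "act u z = z"
  shows "minimal_point (act ` G) z"
  unfolding minimal_point_def minimal_set_def
proof (intro conjI allI impI)
  let ?Y = "closure (orbit (act ` G) z)"
  obtain L where L: "min_left_ideal L" "u \<in> L" using u by (auto simp: min_idempotent_def)
  note L_ideal = min_left_idealD(4)[OF L(1)]
  have "u \<in> closure G" using min_left_idealD(3)[OF L(1)] L(2) by blast
  show "closed ?Y" by simp
  show "?Y \<noteq> {}" using \<open>u \<in> closure G\<close> by (auto simp: closure_orbit_eq)
  show "\<forall>g\<in>act ` G. g ` ?Y \<subseteq> ?Y" by (rule closure_orbit_invariant)
  fix Z assume Z: "Z \<subseteq> ?Y \<and> Z \<noteq> {} \<and> closed Z \<and> (\<forall>g\<in>act ` G. g ` Z \<subseteq> Z)"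
  then obtain w where "w \<in> Z" by blast
  then have "w \<in> (\<lambda>b. act b z) ` closure G" using Z closure_orbit_eq by blast
  then obtain b where "b \<in> closure G" "act b z \<in> Z" using \<open>w \<in> Z\<close> by blast
  have "b \<cdot> u \<in> L" using L_ideal \<open>b \<in> closure G\<close> L(2) by blast
  then obtain c where "c \<in> closure G" "c \<cdot> (b \<cdot> u) = u"
    using min_left_ideal_eq_image[OF L(1)] L(2) by (metis imageE)
  then have "act c (act b z) = z"
    using \<open>act u z = z\<close> by (metis act_mult)
  then have "z \<in> Z" using act_closure_mem Z \<open>act b z \<in> Z\<close> \<open>c \<in> closure G\<close> by metis
  then have "?Y \<subseteq> Z" using act_closure_mem Z by (auto simp: closure_orbit_eq)
  then show "Z = ?Y" using Z by blast
qed

lemma minimal_point_eq_image_min_left_ideal: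
  assumes min: "minimal_point (act ` G) z" and L: "min_left_ideal L"
  shows "(\<lambda>a. act a z) ` L = closure (orbit (act ` G) z)"
proof -
  let ?Y = "closure (orbit (act ` G) z)"
  have Y_min: "\<And>Z. Z \<subseteq> ?Y \<Longrightarrow> Z \<noteq> {} \<Longrightarrow> closed Z \<Longrightarrow> \<forall>g\<in>act ` G. g ` Z \<subseteq> Z \<Longrightarrow> Z = ?Y"
    using min unfolding minimal_point_def minimal_set_def by blast
  note L_props = min_left_idealD[OF L]
  show ?thesis
  proof (rule Y_min)
    show "(\<lambda>a. act a z) ` L \<subseteq> ?Y" using L_props(3) by (auto simp: closure_orbit_eq)
    show "(\<lambda>a. act a z) ` L \<noteq> {}" using L_props(2) by blast
    show "closed ((\<lambda>a. act a z) ` L)" by (rule closed_image_act_left[OF L_props(1,3)])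
    show "\<forall>g\<in>act ` G. g ` (\<lambda>a. act a z) ` L \<subseteq> (\<lambda>a. act a z) ` L"
    proof (intro ballI subsetI)
      fix g x assume "g \<in> act ` G" "x \<in> g ` (\<lambda>a. act a z) ` L"
      then obtain a l where "a \<in> G" "l \<in> L" "x = act (a \<cdot> l) z" by (auto simp: act_mult)
      moreover have "a \<cdot> l \<in> L" using L_props(4) closure_subset \<open>a \<in> G\<close> \<open>l \<in> L\<close> by blast
      ultimately show "x \<in> (\<lambda>a. act a z) ` L" by blast
    qed
  qed
qed

lemma closed_subsemigroup_stabiliser:
  assumes L: "min_left_ideal L" and "\<exists>a\<in>L. act a z = z"
  shows "closed_subsemigroup {a \<in> L. act a z = z}"
  unfolding closed_subsemigroup_def
proof (intro conjI ballI)
  note L_props = min_left_idealD[OF L]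
  show "closed {a \<in> L. act a z = z}"
    using continuous_closed_preimage[OF continuous_on_subset[OF continuous_act_left subset_UNIV]
        L_props(1) closed_singleton]
    by (simp add: Int_def)
  show "{a \<in> L. act a z = z} \<noteq> {}" "{a \<in> L. act a z = z} \<subseteq> closure G"
    using assms(2) L_props(3) by auto
  fix b c assume "b \<in> {a \<in> L. act a z = z}" "c \<in> {a \<in> L. act a z = z}"
  then show "b \<cdot> c \<in> {a \<in> L. act a z = z}"
    using L_props(3,4) by (auto simp: act_mult)
qed

lemma minimal_point_imp_min_idempotent_fixed:
  assumes "minimal_point (act ` G) z" and "e \<in> G" "act e z = z"
  shows "\<exists>u. min_idempotent u \<and> act u z = z"
proof -
  have "left_ideal (closure G)"
    using \<open>e \<in> G\<close> closure_subset mult_closed by (auto simp: left_ideal_def)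
  then obtain L where L: "min_left_ideal L"
    using exists_min_left_ideal by blast
  have "z \<in> (\<lambda>b. act b z) ` closure G"
    using \<open>e \<in> G\<close> \<open>act e z = z\<close> closure_subset[of G] by (metis image_eqI subsetD)
  then have "\<exists>a\<in>L. act a z = z"
    using minimal_point_eq_image_min_left_ideal[OF assms(1) L] closure_orbit_eq by (metis imageE)
  then obtain u where "u \<in> L" "act u z = z" "u \<cdot> u = u"
    using exists_idempotent[OF closed_subsemigroup_stabiliser[OF L]] by blast
  then show ?thesis using L by (auto simp: min_idempotent_def)
qed

end

section \<open>The enveloping semigroups of \<open>\<tau>\<close> and of \<open>G\<^sub>d(T)\<close>\<close>

lemma continuous_on_funpow:
  assumes "continuous_on UNIV (f :: 'a::topological_space \<Rightarrow> 'a)"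
  shows "continuous_on UNIV (f ^^ n)"
proof (induction n)
  case (Suc n)
  have "continuous_on UNIV (\<lambda>x. f ((f ^^ n) x))"
    using continuous_on_compose2[OF assms Suc] by simp
  then show ?case by (simp add: comp_def)
qed (simp add: continuous_on_id)

lemma continuous_on_tpow:
  assumes "continuous_on UNIV T" "continuous_on UNIV (inv T)"
  shows "continuous_on UNIV (tpow T k)"
  unfolding tpow_def using assms continuous_on_funpow by auto

lemma tpow_add1:
  assumes "bij T"
  shows "tpow T (k + 1) = T \<circ> tpow T k"
proof (cases "0 \<le> k")
  case True
  then have "nat (k + 1) = Suc (nat k)" by simp
  then show ?thesis using True by (simp add: tpow_def)
next
  case False
  define m where "m = nat (- (k + 1))"
  have "tpow T (k + 1) = inv T ^^ m"
    using False by (cases "k + 1 = 0") (simp_all add: tpow_def m_def)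
  moreover have "nat (- k) = Suc m" using False by (simp add: m_def)
  then have "tpow T k = inv T \<circ> (inv T ^^ m)" using False by (simp add: tpow_def)
  ultimately show ?thesis
    using surj_iff[THEN iffD1, OF bij_is_surj[OF assms]] by (simp add: o_assoc)
qed

lemma tpow_diff1:
  assumes "bij T"
  shows "tpow T (k - 1) = inv T \<circ> tpow T k"
  using tpow_add1[OF assms, of "k - 1"] inv_o_cancel[OF bij_is_inj[OF assms]]
  by (simp add: o_assoc)

lemma tpow_add:
  assumes "bij T"
  shows "tpow T (a + b) = tpow T a \<circ> tpow T b"
proof (induction a rule: int_induct[where k = 0])
  case base
  then show ?case by (simp add: tpow_def)
next
  case (step1 i)
  then show ?case using tpow_add1[OF assms, of "i + b"] tpow_add1[OF assms, of i]
    by (simp add: algebra_simps comp_assoc)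
next
  case (step2 i)
  then show ?case using tpow_diff1[OF assms, of "i + b"] tpow_diff1[OF assms, of i]
    by (simp add: algebra_simps comp_assoc)
qed

lemma mult_mem_closure:
  fixes m :: "'a::topological_space \<Rightarrow> 'a \<Rightarrow> 'a"
  assumes G: "\<And>a b. a \<in> G \<Longrightarrow> b \<in> G \<Longrightarrow> m a b \<in> G"
    and left: "\<And>a. a \<in> G \<Longrightarrow> continuous_on UNIV (m a)"
    and right: "\<And>b. continuous_on UNIV (\<lambda>a. m a b)"
    and "a \<in> closure G" "b \<in> closure G"
  shows "m a b \<in> closure G"
proof -
  have "m g c \<in> closure G" if "g \<in> G" "c \<in> closure G" for g c
  proof -
    have "m g ` G \<subseteq> closure G" using G \<open>g \<in> G\<close> closure_subset by blast
    then have "m g ` closure G \<subseteq> closure G"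
      by (rule image_closure_subset[OF continuous_on_subset[OF left[OF \<open>g \<in> G\<close>] subset_UNIV] closed_closure])
    then show ?thesis using \<open>c \<in> closure G\<close> by blast
  qed
  then have "(\<lambda>x. m x b) ` G \<subseteq> closure G" using \<open>b \<in> closure G\<close> by blast
  then have "(\<lambda>x. m x b) ` closure G \<subseteq> closure G"
    by (rule image_closure_subset[OF continuous_on_subset[OF right subset_UNIV] closed_closure])
  then show ?thesis using \<open>a \<in> closure G\<close> by blast
qed

definition pcomp :: "('i \<Rightarrow> 'a \<Rightarrow> 'a) \<Rightarrow> ('i \<Rightarrow> 'a \<Rightarrow> 'a) \<Rightarrow> 'i \<Rightarrow> 'a \<Rightarrow> 'a" where
  "pcomp f g = (\<lambda>i. f i \<circ> g i)"

lemma continuous_on_pcomp_left: "continuous_on UNIV (\<lambda>f. pcomp f (g :: 'i \<Rightarrow> 'a::topological_space \<Rightarrow> 'a))"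
  unfolding pcomp_def comp_def
  by (intro continuous_on_coordinatewise_then_product continuous_on_eval2)

lemma continuous_on_pcomp_right:
  fixes f :: "'i \<Rightarrow> 'a::topological_space \<Rightarrow> 'a"
  assumes "\<And>i. continuous_on UNIV (f i)"
  shows "continuous_on UNIV (pcomp f)"
  unfolding pcomp_def comp_def
proof (intro continuous_on_coordinatewise_then_product)
  fix i x
  show "continuous_on UNIV (\<lambda>g::'i \<Rightarrow> 'a \<Rightarrow> 'a. f i (g i x))"
    by (rule continuous_on_compose2[OF assms continuous_on_eval2]) simp
qed

lemma compact_rt_semigroup_pcomp:
  fixes G :: "('i \<Rightarrow> 'a::t2_space \<Rightarrow> 'a) set"
  assumes "compact (UNIV :: 'a set)"
    and G_pcomp: "\<And>f g. f \<in> G \<Longrightarrow> g \<in> G \<Longrightarrow> pcomp f g \<in> G"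
    and G_continuous: "\<And>f i. f \<in> G \<Longrightarrow> continuous_on UNIV (f i)"
  shows "compact_rt_semigroup (closure G) pcomp"
proof
  show "Hausdorff_space (euclidean :: ('i \<Rightarrow> 'a \<Rightarrow> 'a) topology)"
    by (intro Hausdorff_space_euclidean_fun Hausdorff_space_euclidean_t2)
  show "compact (closure G)"
    using compact_Int_closed[OF compact_UNIV_fun[OF compact_UNIV_fun[OF assms(1)]] closed_closure] by simp
  show "pcomp a b \<in> closure G" if "a \<in> closure G" "b \<in> closure G" for a b
    by (rule mult_mem_closure[where m = pcomp, OF _ _ continuous_on_pcomp_left that])
      (simp_all add: G_pcomp continuous_on_pcomp_right G_continuous)
  show "pcomp (pcomp a b) c = pcomp a (pcomp b c)" for a b c :: "'i \<Rightarrow> 'a \<Rightarrow> 'a"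
    by (simp add: pcomp_def comp_assoc)
  show "continuous_on (closure G) (\<lambda>a. pcomp a b)" for b
    by (rule continuous_on_subset[OF continuous_on_pcomp_left subset_UNIV])
qed

definition coord_act :: "nat \<Rightarrow> nat \<Rightarrow> (nat \<Rightarrow> 'a \<Rightarrow> 'a) \<Rightarrow> (nat \<Rightarrow> nat \<Rightarrow> 'a) \<Rightarrow> nat \<Rightarrow> nat \<Rightarrow> 'a" where
  "coord_act n d f w = (\<lambda>j i. if j < n \<and> i < d then f i (w j i) else w j i)"

lemma coord_act_pcomp: "coord_act n d (pcomp f g) w = coord_act n d f (coord_act n d g w)"
  by (simp add: coord_act_def pcomp_def fun_eq_iff)

lemma continuous_on_coord_act_left:
  "continuous_on UNIV (\<lambda>f. coord_act n d f (w :: nat \<Rightarrow> nat \<Rightarrow> 'a::topological_space))"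
  unfolding coord_act_def
proof (intro continuous_on_coordinatewise_then_product)
  fix j i
  show "continuous_on UNIV (\<lambda>f. if j < n \<and> i < d then f i (w j i) else w j i)"
  proof (cases "j < n \<and> i < d")
    case True
    then show ?thesis by (simp add: continuous_on_eval2)
  next
    case False
    then show ?thesis by (simp only: if_not_P[OF False] if_False continuous_on_const)
  qed
qed

lemma enveloping_action_coord_act:
  fixes G :: "(nat \<Rightarrow> 'a::metric_space \<Rightarrow> 'a) set"
  assumes "compact (UNIV :: 'a set)"
    and "\<And>f g. f \<in> G \<Longrightarrow> g \<in> G \<Longrightarrow> pcomp f g \<in> G"
    and "\<And>f i. f \<in> G \<Longrightarrow> continuous_on UNIV (f i)"
  shows "enveloping_action G pcomp (coord_act n d)"
proof -
  have "compact_rt_semigroup (closure G) pcomp"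
    by (rule compact_rt_semigroup_pcomp) (fact assms)+
  then show ?thesis
    unfolding enveloping_action_def enveloping_action_axioms_def using assms(2,3)
    by (simp add: coord_act_pcomp continuous_on_coord_act_left)
qed

(* The elements \<tau>^p and \<tau>^p \<sigma>^q, given by their coordinate maps i \<mapsto> T^(p + q (i + 1)). *)
definition diag_maps :: "('a \<Rightarrow> 'a) \<Rightarrow> (nat \<Rightarrow> 'a \<Rightarrow> 'a) set" where
  "diag_maps T = {(\<lambda>i. tpow T p) | p. True}"

definition Gd_maps :: "('a \<Rightarrow> 'a) \<Rightarrow> (nat \<Rightarrow> 'a \<Rightarrow> 'a) set" where
  "Gd_maps T = {(\<lambda>i. tpow T (p + q * int (Suc i))) | p q. True}"

lemma gact_eq_coord_act: "gact T n d p q = coord_act n d (\<lambda>i. tpow T (p + q * int (Suc i)))"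
  by (simp add: gact_def coord_act_def fun_eq_iff)

lemma Tdiag_eq: "Tdiag T n d = coord_act n d ` diag_maps T"
  unfolding Tdiag_def diag_maps_def gact_eq_coord_act by auto

lemma Gd_diag_eq: "Gd_diag T n d = coord_act n d ` Gd_maps T"
  unfolding Gd_diag_def Gd_maps_def gact_eq_coord_act by auto

lemma pcomp_Gd_maps:
  assumes "bij T" "f \<in> Gd_maps T" "g \<in> Gd_maps T"
  shows "pcomp f g \<in> Gd_maps T"
proof -
  obtain p q p' q' where "f = (\<lambda>i. tpow T (p + q * int (Suc i)))" "g = (\<lambda>i. tpow T (p' + q' * int (Suc i)))"
    using assms(2,3) by (auto simp: Gd_maps_def)
  then have "pcomp f g = (\<lambda>i. tpow T ((p + p') + (q + q') * int (Suc i)))"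
    by (simp add: pcomp_def tpow_add[OF assms(1), symmetric] algebra_simps)
  then show ?thesis by (auto simp: Gd_maps_def)
qed

lemma pcomp_diag_maps:
  assumes "bij T" "f \<in> diag_maps T" "g \<in> diag_maps T"
  shows "pcomp f g \<in> diag_maps T"
  using assms by (auto simp: diag_maps_def pcomp_def tpow_add[symmetric])

lemma homeomorphism_inv_imp_bij: "homeomorphism UNIV UNIV T (inv T) \<Longrightarrow> bij T"
  unfolding homeomorphism_def by (auto intro!: o_bij[of "inv T"] simp: fun_eq_iff)

lemma diag_maps_subset_Gd_maps: "diag_maps T \<subseteq> Gd_maps T"
proof
  fix f assume "f \<in> diag_maps T"
  then obtain p where "f = (\<lambda>i. tpow T (p + 0 * int (Suc i)))" by (auto simp: diag_maps_def)
  then show "f \<in> Gd_maps T" unfolding Gd_maps_def by blast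
qed

lemma continuous_on_Gd_maps:
  assumes "homeomorphism UNIV UNIV T (inv T)" "f \<in> Gd_maps T"
  shows "continuous_on UNIV (f i)"
  using assms continuous_on_tpow unfolding homeomorphism_def Gd_maps_def by auto

lemma closure_Gd_maps_diagonal:
  assumes "b \<in> closure (Gd_maps T)"
  shows "(\<lambda>i. b k) \<in> closure (diag_maps T)"
proof -
  have "continuous_on UNIV (\<lambda>b::nat \<Rightarrow> 'a \<Rightarrow> 'a. \<lambda>i::nat. b k)"
    by (intro continuous_on_coordinatewise_then_product continuous_on_product_coordinates)
  moreover have "(\<lambda>b. \<lambda>i. b k) ` Gd_maps T \<subseteq> closure (diag_maps T)"
    using closure_subset by (fastforce simp: Gd_maps_def diag_maps_def)
  ultimately have "(\<lambda>b. \<lambda>i. b k) ` closure (Gd_maps T) \<subseteq> closure (diag_maps T)"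
    by (intro image_closure_subset[OF continuous_on_subset closed_closure]) auto
  then show ?thesis using assms by blast
qed

lemma closure_diag_maps_const:
  fixes T :: "'a::t2_space \<Rightarrow> 'a"
  assumes "u \<in> closure (diag_maps T)"
  shows "u i = u k"
proof -
  have "closed {b :: nat \<Rightarrow> 'a \<Rightarrow> 'a. \<forall>x. b i x = b k x}"
    by (intro closed_Collect_all closed_Collect_eq continuous_on_eval2)
  moreover have "diag_maps T \<subseteq> {b. \<forall>x. b i x = b k x}"
    by (auto simp: diag_maps_def)
  ultimately have "closure (diag_maps T) \<subseteq> {b. \<forall>x. b i x = b k x}"
    by (rule closure_minimal[rotated])
  then show ?thesis using assms by (auto simp: fun_eq_iff)
qed

lemma min_idempotent_diag_maps_imp_Gd_maps:
  fixes T :: "'a::t2_space \<Rightarrow> 'a"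
  assumes "compact (UNIV :: 'a set)" and hom: "homeomorphism UNIV UNIV T (inv T)"
    and "compact_rt_semigroup.min_idempotent (closure (diag_maps T)) pcomp u"
  shows "compact_rt_semigroup.min_idempotent (closure (Gd_maps T)) pcomp u"
proof -
  have "bij T" by (rule homeomorphism_inv_imp_bij[OF hom])
  interpret D: compact_rt_semigroup "closure (diag_maps T)" pcomp
    by (rule compact_rt_semigroup_pcomp[OF assms(1)])
      (use pcomp_diag_maps[OF \<open>bij T\<close>] continuous_on_Gd_maps[OF hom] diag_maps_subset_Gd_maps in blast)+
  interpret E: compact_rt_semigroup "closure (Gd_maps T)" pcomp
    by (rule compact_rt_semigroup_pcomp[OF assms(1)])
      (use pcomp_Gd_maps[OF \<open>bij T\<close>] continuous_on_Gd_maps[OF hom] in blast)+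
  have u: "D.min_idempotent u" by fact
  then have "u \<in> closure (Gd_maps T)" "pcomp u u = u"
    using D.min_idempotent_mem closure_mono[OF diag_maps_subset_Gd_maps]
    by (auto simp: D.min_idempotent_def)
  then obtain f where f: "E.min_idempotent f" "pcomp u f = f" "pcomp f u = f"
    using E.exists_min_idempotent_below by blast
  have "f k = u k" for k
  proof -
    have "f \<in> closure (Gd_maps T)" "pcomp f f = f"
      using f(1) E.min_idempotent_mem by (auto simp: E.min_idempotent_def)
    have u_const: "u = (\<lambda>i. u k)"
      using closure_diag_maps_const D.min_idempotent_mem[OF u] by blast
    have "(\<lambda>i. f k) = u"
    proof (rule D.min_idempotent_minimal[OF u])
      show "(\<lambda>i. f k) \<in> closure (diag_maps T)"
        by (rule closure_Gd_maps_diagonal[OF \<open>f \<in> closure (Gd_maps T)\<close>])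
      show "pcomp (\<lambda>i. f k) (\<lambda>i. f k) = (\<lambda>i. f k)"
        using fun_cong[OF \<open>pcomp f f = f\<close>, of k] by (simp add: pcomp_def)
      show "pcomp u (\<lambda>i. f k) = (\<lambda>i. f k)"
        using fun_cong[OF f(2), of k] u_const by (simp add: pcomp_def) (metis (no_types))
      show "pcomp (\<lambda>i. f k) u = (\<lambda>i. f k)"
        using fun_cong[OF f(3), of k] u_const by (simp add: pcomp_def) (metis (no_types))
    qed
    then show ?thesis using fun_cong[of "\<lambda>i. f k" u k] by simp
  qed
  then have "f = u" by (simp add: fun_eq_iff)
  then show ?thesis using f(1) by simp
qed

theorem lemma5p8:
  fixes T :: "'a::metric_space \<Rightarrow> 'a" and n d :: nat and z :: "nat \<Rightarrow> nat \<Rightarrow> 'a"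
  assumes "minimal_system T"
    and "z \<in> Nd_pow T n d"
    and "minimal_point (Tdiag T n d) z"
  shows "minimal_point (Gd_diag T n d) z"
proof -
  have compact: "compact (UNIV :: 'a set)" and hom: "homeomorphism UNIV UNIV T (inv T)"
    using assms(1) by (auto simp: minimal_system_def)
  have "bij T" by (rule homeomorphism_inv_imp_bij[OF hom])
  interpret D: enveloping_action "diag_maps T" pcomp "coord_act n d"
    by (rule enveloping_action_coord_act[OF compact])
      (use pcomp_diag_maps[OF \<open>bij T\<close>] continuous_on_Gd_maps[OF hom] diag_maps_subset_Gd_maps in blast)+
  interpret E: enveloping_action "Gd_maps T" pcomp "coord_act n d"
    by (rule enveloping_action_coord_act[OF compact])
      (use pcomp_Gd_maps[OF \<open>bij T\<close>] continuous_on_Gd_maps[OF hom] in blast)+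
  have "(\<lambda>i. tpow T 0) \<in> diag_maps T" by (auto simp: diag_maps_def)
  moreover have "coord_act n d (\<lambda>i. tpow T 0) z = z" by (simp add: tpow_def coord_act_def fun_eq_iff)
  ultimately obtain u where "D.min_idempotent u" "coord_act n d u z = z"
    using D.minimal_point_imp_min_idempotent_fixed assms(3) by (auto simp: Tdiag_eq)
  then have "E.min_idempotent u"
    using min_idempotent_diag_maps_imp_Gd_maps[OF compact hom] by blast
  then show ?thesis
    using E.min_idempotent_fixed_imp_minimal_point \<open>coord_act n d u z = z\<close> by (simp add: Gd_diag_eq)
qed

end
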